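(* Let $m\equiv n\equiv 0\pmod 3$, $u\equiv 2,4\pmod 6$, $v=2m+2n+u$, $c<\binom u3$, and let $(u,c)$ satisfy (C2) with associated pair $(\lambda,\delta)$. Suppose (i) $(V,\mathcal A)$ is a simple NGDD$(2,3,v)$ of type $2^{(m,n)}u^1$ with size-2 groups $G_1,\dots,G_{m+n}$ and group $U$ of size $u$; (ii) $(V,\mathcal B)$ is a simple GDD$_{\lambda-1}(2,3,v)$ of type $1^{2m+2n}u^1$ with long group $U$; and (iii) $(U,\mathcal C)$ is an NWBTS$(u;c)$. If $\mathcal A,\mathcal B,\mathcal C$ are pairwise disjoint, then $\mathcal F=\mathcal A\cup\mathcal B\cup\mathcal C$ is the block set of an NWBTS$(v;|\mathcal F|)$, where $3|\mathcal F|=\lambda\binom v2+m-n+\delta$.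
   Context: NGDD$(2,3,v)$ of type $2^{(m,n)}u^1$: $V$ is a set of $v=2(m+n)+u$ points partitioned into groups $G_1,\dots,G_{m+n}$ of size 2 and $U$ of size $u$; a set of triples on $V$ such that each pair $G_i$ with $1\le i\le m$ lies in exactly two blocks, each pair in $\binom U2\cup\{G_i:m<i\le m+n\}$ lies in no block, and every other pair of $V$ lies in exactly one block. A GDD$_\mu(2,3,v)$ of type $1^{v-u}u^1$ with long group $U$: triples on $V$, none containing two points of $U$, every pair not inside $U$ in exactly $\mu$ blocks. Simple: no repeated blocks. A triple system TS$(v;b)$ is a pair $(V,\mathcal F)$, $V$ a set of $v\ge3$ points, $\mathcal F$ a multiset of $b$ 3-subsets (blocks). $\lambda_{x_1,\dots,x_j}$ is the number of blocks containing $\{x_1,\dots,x_j\}$; $j$-balanced means $|\lambda_{x_1,\dots,x_j}-\lambda_{y_1,\dots,y_j}|\le1$ for all $j$-subsets. Associated pair $(\lambda,\varepsilon)$ of $(v,b)$: $3b=\lambda\binom v2+\varepsilon$, $-v/2<\varepsilon<v/2$. (C2): $v$ even and $\lambda v(v-1)/6-v/6<b<\lambda v(v-1)/6+v/6$ for odd $\lambda$ (the $\lambda$ of the associated pair). Defect graph (when all $\lambda_{x,y}\in\{\lambda-1,\lambda,\lambda+1\}$): graph on $V$ with edges of pairs with $\lambda_{x,y}=\lambda+1$ (label $+1$) or $\lambda-1$ (label $-1$); isomorphisms preserve labels. $H^0_{v,\varepsilon}$: perfect matching with $(v+2\varepsilon)/4$ edges $+1$, $(v-2\varepsilon)/4$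 edges $-1$; $H^1_{v,\varepsilon}$: disjoint union of a $K_{1,3}$ with two $+1$ and one $-1$ edge and a matching of the other $v-4$ vertices with $(v-6+2\varepsilon)/4$ edges $+1$, $(v-2-2\varepsilon)/4$ edges $-1$; $H^2_{v,\varepsilon}$: disjoint union of a $K_{1,3}$ with one $+1$ and two $-1$ edges and a matching of the other $v-4$ vertices with $(v-2+2\varepsilon)/4$ edges $+1$, $(v-6-2\varepsilon)/4$ edges $-1$. Under (C2) a TS is nearly 2-balanced if all $\lambda_{x,y}\in\{\lambda-1,\lambda,\lambda+1\}$ and its defect graph is $\cong H^0_{v,\varepsilon}$ when $\varepsilon\equiv v/2\pmod 2$, and $\cong H^1_{v,\varepsilon}$ or $H^2_{v,\varepsilon}$ otherwise. An NWBTS is a nearly 2-balanced, 3-balanced TS. *)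

theory Defs
  imports Main "HOL-Library.Multiset"
begin

definition lam :: "'a set multiset \<Rightarrow> 'a set \<Rightarrow> nat" where
  "lam F S = size (filter_mset (\<lambda>B. S \<subseteq> B) F)"

definition TS :: "'a set \<Rightarrow> 'a set multiset \<Rightarrow> bool" where
  "TS V F \<longleftrightarrow> finite V \<and> card V \<ge> 3 \<and> (\<forall>B\<in>#F. B \<subseteq> V \<and> card B = 3)"

definition assoc_pair :: "nat \<Rightarrow> nat \<Rightarrow> int \<Rightarrow> int \<Rightarrow> bool" where
  "assoc_pair v b l e \<longleftrightarrow> 3 * int b = l * int (v choose 2) + e \<and> - int v < 2 * e \<and> 2 * e < int v"

(* condition (C2) for (v,b), l being the lambda of the associated pair *)
definition C2 :: "nat \<Rightarrow> nat \<Rightarrow> int \<Rightarrow> bool" where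
  "C2 v b l \<longleftrightarrow> even v \<and> odd l \<and>
     l * int v * (int v - 1) - int v < 6 * int b \<and> 6 * int b < l * int v * (int v - 1) + int v"

(* Model labelled graphs H^0, H^1, H^2 on the vertex set {0..<v}; value 0 = no edge. *)
definition H0 :: "nat \<Rightarrow> int \<Rightarrow> nat \<Rightarrow> nat \<Rightarrow> int" where
  "H0 v e x y = (if x < v \<and> y < v \<and> x \<noteq> y \<and> x div 2 = y div 2
                  then (if int (x div 2) < (int v + 2 * e) div 4 then 1 else -1) else 0)"

(* H^0 exists with the prescribed numbers of +1 / -1 edges *)
definition H0_ok :: "nat \<Rightarrow> int \<Rightarrow> bool" where
  "H0_ok v e \<longleftrightarrow> even v \<and> (int v + 2 * e) mod 4 = 0 \<and> 0 \<le> (int v + 2 * e) div 4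
     \<and> 0 \<le> (int v - 2 * e) div 4 \<and> (int v - 2 * e) mod 4 = 0"

definition Hstar :: "int \<Rightarrow> int \<Rightarrow> int \<Rightarrow> int \<Rightarrow> nat \<Rightarrow> nat \<Rightarrow> nat \<Rightarrow> int" where
  "Hstar s1 s2 s3 q v x y =
     (if x < v \<and> y < v \<and> x \<noteq> y then
        (if {x, y} = {0, 1} then s1
         else if {x, y} = {0, 2} then s2
         else if {x, y} = {0, 3} then s3
         else if 4 \<le> x \<and> 4 \<le> y \<and> (x - 4) div 2 = (y - 4) div 2
           then (if int ((x - 4) div 2) < q then 1 else -1)
         else 0)
      else 0)"

definition H1 :: "nat \<Rightarrow> int \<Rightarrow> nat \<Rightarrow> nat \<Rightarrow> int" where
  "H1 v e = Hstar 1 1 (-1) ((int v - 6 + 2 * e) div 4) v"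

definition H1_ok :: "nat \<Rightarrow> int \<Rightarrow> bool" where
  "H1_ok v e \<longleftrightarrow> even v \<and> v \<ge> 4 \<and> (int v - 6 + 2 * e) mod 4 = 0 \<and> 0 \<le> (int v - 6 + 2 * e) div 4
     \<and> (int v - 2 - 2 * e) mod 4 = 0 \<and> 0 \<le> (int v - 2 - 2 * e) div 4"

definition H2 :: "nat \<Rightarrow> int \<Rightarrow> nat \<Rightarrow> nat \<Rightarrow> int" where
  "H2 v e = Hstar 1 (-1) (-1) ((int v - 2 + 2 * e) div 4) v"

definition H2_ok :: "nat \<Rightarrow> int \<Rightarrow> bool" where
  "H2_ok v e \<longleftrightarrow> even v \<and> v \<ge> 4 \<and> (int v - 2 + 2 * e) mod 4 = 0 \<and> 0 \<le> (int v - 2 + 2 * e) div 4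
     \<and> (int v - 6 - 2 * e) mod 4 = 0 \<and> 0 \<le> (int v - 6 - 2 * e) div 4"

definition defect_iso :: "'a set \<Rightarrow> 'a set multiset \<Rightarrow> int \<Rightarrow> (nat \<Rightarrow> nat \<Rightarrow> int) \<Rightarrow> bool" where
  "defect_iso V F l H \<longleftrightarrow> (\<exists>f. bij_betw f V {0..<card V} \<and>
      (\<forall>x\<in>V. \<forall>y\<in>V. x \<noteq> y \<longrightarrow> int (lam F {x, y}) - l = H (f x) (f y)))"

definition nearly_2_balanced :: "'a set \<Rightarrow> 'a set multiset \<Rightarrow> bool" where
  "nearly_2_balanced V F \<longleftrightarrow> (\<exists>l e. assoc_pair (card V) (size F) l e \<and> C2 (card V) (size F) l \<and>
     (\<forall>x\<in>V. \<forall>y\<in>V. x \<noteq> y \<longrightarrow> int (lam F {x, y}) \<in> {l - 1, l, l + 1}) \<and>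
     (if e mod 2 = int (card V div 2) mod 2
      then H0_ok (card V) e \<and> defect_iso V F l (H0 (card V) e)
      else (H1_ok (card V) e \<and> defect_iso V F l (H1 (card V) e)) \<or>
           (H2_ok (card V) e \<and> defect_iso V F l (H2 (card V) e))))"

definition three_balanced :: "'a set \<Rightarrow> 'a set multiset \<Rightarrow> bool" where
  "three_balanced V F \<longleftrightarrow> (\<forall>S\<subseteq>V. \<forall>T\<subseteq>V. card S = 3 \<longrightarrow> card T = 3 \<longrightarrow>
      \<bar>int (lam F S) - int (lam F T)\<bar> \<le> 1)"

definition NWBTS :: "'a set \<Rightarrow> 'a set multiset \<Rightarrow> bool" where
  "NWBTS V F \<longleftrightarrow> TS V F \<and> nearly_2_balanced V F \<and> three_balanced V F"

definition pcount :: "'a set set \<Rightarrow> 'a set \<Rightarrow> nat" where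
  "pcount A P = card {B\<in>A. P \<subseteq> B}"

definition NGDD :: "'a set \<Rightarrow> (nat \<Rightarrow> 'a set) \<Rightarrow> 'a set \<Rightarrow> nat \<Rightarrow> nat \<Rightarrow> nat \<Rightarrow> 'a set set \<Rightarrow> bool" where
  "NGDD V G U m n u A \<longleftrightarrow> finite V \<and>
     V = U \<union> (\<Union>i\<in>{1..m+n}. G i) \<and> card U = u \<and>
     (\<forall>i\<in>{1..m+n}. G i \<subseteq> V \<and> card (G i) = 2 \<and> G i \<inter> U = {}) \<and>
     (\<forall>i\<in>{1..m+n}. \<forall>j\<in>{1..m+n}. i \<noteq> j \<longrightarrow> G i \<inter> G j = {}) \<and>
     (\<forall>B\<in>A. B \<subseteq> V \<and> card B = 3) \<and>
     (\<forall>P. P \<subseteq> V \<longrightarrow> card P = 2 \<longrightarrow>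
        pcount A P = (if \<exists>i\<in>{1..m}. P = G i then 2
                      else if P \<subseteq> U \<or> (\<exists>i\<in>{m+1..m+n}. P = G i) then 0
                      else 1))"

definition GDD :: "'a set \<Rightarrow> 'a set \<Rightarrow> int \<Rightarrow> 'a set set \<Rightarrow> bool" where
  "GDD V U mu B \<longleftrightarrow> finite V \<and> U \<subseteq> V \<and>
     (\<forall>T\<in>B. T \<subseteq> V \<and> card T = 3 \<and> card (T \<inter> U) \<le> 1) \<and>
     (\<forall>P. P \<subseteq> V \<longrightarrow> card P = 2 \<longrightarrow> \<not> P \<subseteq> U \<longrightarrow> int (pcount B P) = mu)"

end

theory Submission
  imports Defs
begin

text \<open>A pair inside U is covered by C only. A pair meeting \<open>V - U\<close> is covered \<open>l - 1\<close> times by B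
  and once by A, except for the groups \<open>G\<^sub>i\<close>: twice for \<open>i \<le> m\<close>, never for \<open>i > m\<close>. So the
  defect graph of \<open>A \<union> B \<union> C\<close> is the one of C plus m disjoint \<open>+1\<close> edges and n disjoint
  \<open>-1\<close> edges, which turns \<open>H\<^sup>j\<close> for \<open>(u, \<delta>)\<close> into \<open>H\<^sup>j\<close> for \<open>(v, \<delta> + m - n)\<close>; counting
  pairs gives the number of blocks. No triple is covered twice: since \<open>c < (u choose 3)\<close> some
  triple of U is missed by C, so 3-balance forces C to be simple, and a triple meeting \<open>V - U\<close>
  lies in at most one of the disjoint simple families A and B.\<close>

text \<open>Labelled graph on \<open>{0..<w}\<close>: S on the core \<open>{0..<s}\<close>, and the vertices \<open>s + 2i, s + 2i + 1\<close>
  joined by an edge labelled \<open>+1\<close> for \<open>i < q\<close> and \<open>-1\<close> otherwise. \<open>H\<^sup>0\<close> is the case \<open>s = 0\<close>, and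
  \<open>H\<^sup>1\<close>, \<open>H\<^sup>2\<close> have \<open>s = 4\<close> with the star as core.\<close>

definition core_matching :: "nat \<Rightarrow> (nat \<Rightarrow> nat \<Rightarrow> int) \<Rightarrow> nat \<Rightarrow> nat \<Rightarrow> nat \<Rightarrow> nat \<Rightarrow> int" where
  "core_matching s S q w x y = (if x < w \<and> y < w \<and> x \<noteq> y then
      (if x < s \<and> y < s then S x y
       else if s \<le> x \<and> s \<le> y \<and> (x - s) div 2 = (y - s) div 2
         then (if (x - s) div 2 < q then 1 else -1) else 0) else 0)"

definition star_labels :: "int \<Rightarrow> int \<Rightarrow> int \<Rightarrow> nat \<Rightarrow> nat \<Rightarrow> int" where
  "star_labels s1 s2 s3 x y = (if {x, y} = {0, 1} then s1
         else if {x, y} = {0, 2} then s2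
         else if {x, y} = {0, 3} then s3 else 0)"

lemma H0_eq_core_matching: "H0 w e = core_matching 0 (\<lambda>_ _. 0) (nat ((int w + 2 * e) div 4)) w"
  unfolding H0_def core_matching_def by (intro ext) auto

lemma Hstar_eq_core_matching:
  "0 \<le> q \<Longrightarrow> Hstar s1 s2 s3 q w = core_matching 4 (star_labels s1 s2 s3) (nat q) w"
  unfolding Hstar_def core_matching_def star_labels_def by (intro ext) (auto simp: doubleton_eq_iff)

lemma H1_eq_core_matching:
  "H1_ok w e \<Longrightarrow> H1 w e = core_matching 4 (star_labels 1 1 (-1)) (nat ((int w - 6 + 2 * e) div 4)) w"
  unfolding H1_def H1_ok_def by (simp add: Hstar_eq_core_matching)

lemma H2_eq_core_matching:
  "H2_ok w e \<Longrightarrow> H2 w e = core_matching 4 (star_labels 1 (-1) (-1)) (nat ((int w - 2 + 2 * e) div 4)) w"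
  unfolding H2_def H2_ok_def by (simp add: Hstar_eq_core_matching)

lemma core_matching_core:
  "x < s \<Longrightarrow> y < s \<Longrightarrow> s \<le> w \<Longrightarrow> x \<noteq> y \<Longrightarrow> core_matching s S q w x y = S x y"
  unfolding core_matching_def by simp

lemma core_matching_core_pair:
  assumes "x < s" "t < 2"
  shows "core_matching s S q w x (s + 2 * b + t) = 0" "core_matching s S q w (s + 2 * b + t) x = 0"
  using assms unfolding core_matching_def by auto

lemma core_matching_pair_pair:
  assumes "t < 2" "t' < 2" "s + 2 * a + t < w" "s + 2 * b + t' < w"
  shows "core_matching s S q w (s + 2 * a + t) (s + 2 * b + t') =
         (if a = b \<and> t \<noteq> t' then (if a < q then 1 else -1) else 0)"
proof -
  have "(s + 2 * a + t - s) div 2 = a" "(s + 2 * b + t' - s) div 2 = b" using assms(1,2) by auto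
  then show ?thesis using assms unfolding core_matching_def by auto
qed

lemma int_eq_4_div_4: "(x::int) mod 4 = 0 \<Longrightarrow> x = 4 * (x div 4)"
  by (metis add_0_right div_mult_mod_eq mult.commute)

lemma div_mod_4_add_multiple:
  "(x + int k * 4) div 4 = (x::int) div 4 + int k" "(x + int k * 4) mod 4 = x mod 4"
  by simp_all

lemma H0_ok_fits: "H0_ok w e \<Longrightarrow> 2 * nat ((int w + 2 * e) div 4) \<le> w"
  unfolding H0_ok_def using int_eq_4_div_4[of "int w + 2 * e"] int_eq_4_div_4[of "int w - 2 * e"] by linarith

lemma H1_ok_fits: "H1_ok w e \<Longrightarrow> 4 + 2 * nat ((int w - 6 + 2 * e) div 4) \<le> w"
  unfolding H1_ok_def using int_eq_4_div_4[of "int w - 6 + 2 * e"] int_eq_4_div_4[of "int w - 2 - 2 * e"] by linarith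

lemma H2_ok_fits: "H2_ok w e \<Longrightarrow> 4 + 2 * nat ((int w - 2 + 2 * e) div 4) \<le> w"
  unfolding H2_ok_def using int_eq_4_div_4[of "int w - 2 + 2 * e"] int_eq_4_div_4[of "int w - 6 - 2 * e"] by linarith

lemma H0_ok_add_pairs:
  assumes "H0_ok w e"
  shows "H0_ok (w + 2 * m + 2 * n) (e + int m - int n)"
proof -
  have "int (w + 2 * m + 2 * n) + 2 * (e + int m - int n) = (int w + 2 * e) + int m * 4"
    "int (w + 2 * m + 2 * n) - 2 * (e + int m - int n) = (int w - 2 * e) + int n * 4" by simp_all
  then show ?thesis using assms unfolding H0_ok_def by (simp only: div_mod_4_add_multiple) auto
qed

lemma H1_ok_add_pairs:
  assumes "H1_ok w e"
  shows "H1_ok (w + 2 * m + 2 * n) (e + int m - int n)"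
proof -
  have "int (w + 2 * m + 2 * n) - 6 + 2 * (e + int m - int n) = (int w - 6 + 2 * e) + int m * 4"
    "int (w + 2 * m + 2 * n) - 2 - 2 * (e + int m - int n) = (int w - 2 - 2 * e) + int n * 4" by simp_all
  then show ?thesis using assms unfolding H1_ok_def by (simp only: div_mod_4_add_multiple) auto
qed

lemma H2_ok_add_pairs:
  assumes "H2_ok w e"
  shows "H2_ok (w + 2 * m + 2 * n) (e + int m - int n)"
proof -
  have "int (w + 2 * m + 2 * n) - 2 + 2 * (e + int m - int n) = (int w - 2 + 2 * e) + int m * 4"
    "int (w + 2 * m + 2 * n) - 6 - 2 * (e + int m - int n) = (int w - 6 - 2 * e) + int n * 4" by simp_all
  then show ?thesis using assms unfolding H2_ok_def by (simp only: div_mod_4_add_multiple) auto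
qed

lemma H0_add_pairs:
  assumes "H0_ok w e"
  shows "H0 (w + 2 * m + 2 * n) (e + int m - int n) =
    core_matching 0 (\<lambda>_ _. 0) (nat ((int w + 2 * e) div 4) + m) (w + 2 * m + 2 * n)"
proof -
  have eq: "int (w + 2 * m + 2 * n) + 2 * (e + int m - int n) = (int w + 2 * e) + int m * 4"
    by simp
  have "0 \<le> (int w + 2 * e) div 4" using assms unfolding H0_ok_def by simp
  then show ?thesis unfolding H0_eq_core_matching eq div_mod_4_add_multiple
    by (simp add: nat_add_distrib)
qed
lemma H1_add_pairs:
  assumes "H1_ok w e"
  shows "H1 (w + 2 * m + 2 * n) (e + int m - int n) =
    core_matching 4 (star_labels 1 1 (-1)) (nat ((int w - 6 + 2 * e) div 4) + m) (w + 2 * m + 2 * n)"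
proof -
  have eq: "int (w + 2 * m + 2 * n) - 6 + 2 * (e + int m - int n) = (int w - 6 + 2 * e) + int m * 4"
    by simp
  have "0 \<le> (int w - 6 + 2 * e) div 4" using assms unfolding H1_ok_def by simp
  then show ?thesis unfolding H1_eq_core_matching[OF H1_ok_add_pairs[OF assms]] eq div_mod_4_add_multiple
    by (simp add: nat_add_distrib)
qed

lemma H2_add_pairs:
  assumes "H2_ok w e"
  shows "H2 (w + 2 * m + 2 * n) (e + int m - int n) =
    core_matching 4 (star_labels 1 (-1) (-1)) (nat ((int w - 2 + 2 * e) div 4) + m) (w + 2 * m + 2 * n)"
proof -
  have eq: "int (w + 2 * m + 2 * n) - 2 + 2 * (e + int m - int n) = (int w - 2 + 2 * e) + int m * 4"
    by simp
  have "0 \<le> (int w - 2 + 2 * e) div 4" using assms unfolding H2_ok_def by simp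
  then show ?thesis unfolding H2_eq_core_matching[OF H2_ok_add_pairs[OF assms]] eq div_mod_4_add_multiple
    by (simp add: nat_add_distrib)
qed

lemma double_add_bit_inject: "2 * a + t = 2 * b + t' \<Longrightarrow> t < 2 \<Longrightarrow> t' < 2 \<Longrightarrow> a = b \<and> t = (t'::nat)"
  by presburger

lemma bij_betw_core_matching_positions:
  fixes K M :: "'a set" and h idx side :: "'a \<Rightarrow> nat"
  assumes "finite V" "V = K \<union> M" "K \<inter> M = {}" "bij_betw h K {0..<s}"
    and "inj_on (\<lambda>x. (idx x, side x)) M" "\<forall>x\<in>M. idx x < r \<and> side x < 2"
    and "card V = s + 2 * r"
  shows "bij_betw (\<lambda>x. if x \<in> K then h x else s + 2 * idx x + side x) V {0..<card V}"
    (is "bij_betw ?pos V _")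
proof -
  have inj: "inj_on ?pos V"
  proof (rule inj_onI)
    fix x y assume xy: "x \<in> V" "y \<in> V" "?pos x = ?pos y"
    consider "x \<in> K" "y \<in> K" | "x \<in> K" "y \<in> M" | "x \<in> M" "y \<in> K" | "x \<in> M" "y \<in> M"
      using xy assms(2) by blast
    then show "x = y"
    proof cases
      case 1
      then show ?thesis using xy(3) assms(4) unfolding bij_betw_def inj_on_def by simp
    next
      case 4
      then have "x \<notin> K" "y \<notin> K" using assms(3) by blast+
      then have "2 * idx x + side x = 2 * idx y + side y" using xy(3) by simp
      then have "(idx x, side x) = (idx y, side y)" using 4 assms(6) double_add_bit_inject by blast
      then show ?thesis using 4 assms(5) unfolding inj_on_def by blast
    next
      case 2
      then have "y \<notin> K" "h x < s" using assms(3,4) unfolding bij_betw_def by auto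
      then show ?thesis using 2 xy(3) by simp
    next
      case 3
      then have "x \<notin> K" "h y < s" using assms(3,4) unfolding bij_betw_def by auto
      then show ?thesis using 3 xy(3) by simp
    qed
  qed
  have "?pos ` V = {0..<card V}"
  proof (rule card_subset_eq)
    show "?pos ` V \<subseteq> {0..<card V}" using assms(2,4,6,7) by (auto simp: bij_betw_def)
    show "card (?pos ` V) = card {0..<card V}" using card_image[OF inj] by simp
  qed simp
  then show ?thesis using inj unfolding bij_betw_def by blast
qed

lemma defect_iso_core_matching:
  fixes V K M :: "'a set" and F :: "'a set multiset" and h idx side :: "'a \<Rightarrow> nat"
  assumes fin: "finite V" and V: "V = K \<union> M" "K \<inter> M = {}"
    and h: "bij_betw h K {0..<s}"
    and coord_inj: "inj_on (\<lambda>x. (idx x, side x)) M"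
    and coord_bound: "\<forall>x\<in>M. idx x < r \<and> side x < 2"
    and card: "card V = s + 2 * r"
    and core: "\<forall>x\<in>K. \<forall>y\<in>K. x \<noteq> y \<longrightarrow> int (lam F {x, y}) - l = S (h x) (h y)"
    and cross: "\<forall>x\<in>K. \<forall>y\<in>M. int (lam F {x, y}) = l"
    and matching: "\<forall>x\<in>M. \<forall>y\<in>M. x \<noteq> y \<longrightarrow>
        int (lam F {x, y}) - l = (if idx x = idx y then if idx x < q then 1 else -1 else 0)"
  shows "defect_iso V F l (core_matching s S q (card V))"
proof -
  define pos where "pos x = (if x \<in> K then h x else s + 2 * idx x + side x)" for x
  have bij: "bij_betw pos V {0..<card V}"
    unfolding pos_def by (rule bij_betw_core_matching_positions[OF fin V h coord_inj coord_bound card])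
  have pos_K: "pos x = h x" "h x < s" if "x \<in> K" for x
    using that h unfolding pos_def bij_betw_def by auto
  have pos_M: "pos x = s + 2 * idx x + side x" "pos x < card V" if "x \<in> M" for x
    using that bij V(1,2) unfolding pos_def bij_betw_def by auto
  have "int (lam F {x, y}) - l = core_matching s S q (card V) (pos x) (pos y)"
    if xy: "x \<in> V" "y \<in> V" "x \<noteq> y" for x y
  proof -
    consider "x \<in> K" "y \<in> K" | "x \<in> K" "y \<in> M" | "x \<in> M" "y \<in> K" | "x \<in> M" "y \<in> M"
      using xy V(1) by blast
    then show ?thesis
    proof cases
      case 1
      have "h x \<noteq> h y" using 1 xy(3) h unfolding bij_betw_def inj_on_def by blast
      then show ?thesis using 1 xy core pos_K card by (simp add: core_matching_core)
    next
      case 2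
      then show ?thesis using cross pos_K pos_M coord_bound core_matching_core_pair by simp
    next
      case 3
      then have "int (lam F {x, y}) = l" using cross by (metis insert_commute)
      then show ?thesis using 3 pos_K pos_M coord_bound core_matching_core_pair by simp
    next
      case 4
      have "side x \<noteq> side y" if "idx x = idx y"
        using that 4 xy(3) coord_inj unfolding inj_on_def by blast
      then show ?thesis using 4 xy matching pos_M coord_bound core_matching_pair_pair by auto
    qed
  qed
  then show ?thesis using bij unfolding defect_iso_def by blast
qed

text \<open>Renumbering of the matching edges when m new \<open>+1\<close> edges are inserted after the q old ones
  and n new \<open>-1\<close> edges are appended after all k old edges; the new edges are numbered from 1.\<close>

definition shift_index :: "nat \<Rightarrow> nat \<Rightarrow> nat \<Rightarrow> nat" where
  "shift_index q m p = (if p < q then p else p + m)"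

definition new_index :: "nat \<Rightarrow> nat \<Rightarrow> nat \<Rightarrow> nat \<Rightarrow> nat" where
  "new_index q m k i = (if i \<le> m then q + i - 1 else k + i - 1)"

lemma shift_index_inject: "shift_index q m p = shift_index q m p' \<longleftrightarrow> p = p'"
  unfolding shift_index_def by auto

lemma shift_index_less_iff: "shift_index q m p < q + m \<longleftrightarrow> p < q"
  unfolding shift_index_def by auto

lemma shift_index_less: "p < k \<Longrightarrow> shift_index q m p < k + m + n"
  unfolding shift_index_def by auto

lemma new_index_less: "q \<le> k \<Longrightarrow> i \<in> {1..m + n} \<Longrightarrow> new_index q m k i < k + m + n"
  unfolding new_index_def by auto

lemma new_index_less_iff: "q \<le> k \<Longrightarrow> i \<in> {1..m + n} \<Longrightarrow> new_index q m k i < q + m \<longleftrightarrow> i \<le> m"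
  unfolding new_index_def by auto

lemma new_index_inject:
  "q \<le> k \<Longrightarrow> i \<in> {1..m + n} \<Longrightarrow> j \<in> {1..m + n} \<Longrightarrow> new_index q m k i = new_index q m k j \<longleftrightarrow> i = j"
  unfolding new_index_def by auto

lemma shift_index_ne_new_index:
  "p < k \<Longrightarrow> i \<in> {1..m + n} \<Longrightarrow> shift_index q m p \<noteq> new_index q m k i"
  unfolding shift_index_def new_index_def by auto

lemma lam_add_mset: "lam (add_mset T F) S = lam F S + (if S \<subseteq> T then 1 else 0)"
  unfolding lam_def by simp

lemma sum_lam_pairs:
  assumes "finite V" "\<forall>T\<in>#F. T \<subseteq> V \<and> card T = 3"
  shows "(\<Sum>P | P \<subseteq> V \<and> card P = 2. lam F P) = 3 * size F"
  using assms(2)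
proof (induction F)
  case empty
  then show ?case unfolding lam_def by simp
next
  case (add T F)
  let ?Ps = "{P. P \<subseteq> V \<and> card P = 2}"
  have T: "T \<subseteq> V" "card T = 3" using add.prems by auto
  have "(\<Sum>P\<in>?Ps. if P \<subseteq> T then 1 else 0) = card (?Ps \<inter> {P. P \<subseteq> T})"
    using assms(1) by (simp add: sum.If_cases)
  also have "?Ps \<inter> {P. P \<subseteq> T} = {P. P \<subseteq> T \<and> card P = 2}" using T(1) by auto
  also have "card \<dots> = card T choose 2" using T(2) by (intro n_subsets) (simp add: card_ge_0_finite)
  also have "\<dots> = 3" using T(2) by (simp add: choose_two)
  finally show ?case using add by (simp add: lam_add_mset sum.distrib)
qed

lemma lam_blocks_union:
  "finite A \<Longrightarrow> finite B \<Longrightarrow> lam (mset_set A + mset_set B + C) S = pcount A S + pcount B S + lam C S"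
  unfolding lam_def pcount_def by simp

lemma card_3_subset_eq: "S \<subseteq> T \<Longrightarrow> card S = 3 \<Longrightarrow> card T = 3 \<Longrightarrow> S = T"
  by (metis card_subset_eq card.infinite zero_neq_numeral)

lemma pcount_triple:
  assumes "\<forall>T\<in>A. card T = 3" "card S = 3"
  shows "pcount A S = (if S \<in> A then 1 else 0)"
proof -
  have "{T \<in> A. S \<subseteq> T} = A \<inter> {S}" using assms card_3_subset_eq by blast
  then show ?thesis unfolding pcount_def by simp
qed

lemma lam_triple:
  assumes "\<forall>T\<in>#C. card T = 3" "card S = 3"
  shows "lam C S = count C S"
proof -
  have "filter_mset (\<lambda>T. S \<subseteq> T) C = filter_mset (\<lambda>T. T = S) C"
    using assms card_3_subset_eq by (intro filter_mset_cong) auto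
  then show ?thesis unfolding lam_def count_conv_size_mset by simp
qed

lemma pcount_pos: "finite A \<Longrightarrow> T \<in> A \<Longrightarrow> P \<subseteq> T \<Longrightarrow> 0 < pcount A P"
  unfolding pcount_def by (auto simp: card_gt_0_iff)

lemma ex_triple_not_in_mset:
  assumes "finite U" "size C < card U choose 3"
  shows "\<exists>S\<subseteq>U. card S = 3 \<and> S \<notin># C"
proof (rule ccontr)
  assume "\<not> ?thesis"
  then have "{S. S \<subseteq> U \<and> card S = 3} \<subseteq> set_mset C" by auto
  then have "card {S. S \<subseteq> U \<and> card S = 3} \<le> card (set_mset C)" by (intro card_mono) simp_all
  then have "card U choose 3 \<le> card (set_mset C)" by (simp add: n_subsets[OF assms(1)])
  also have "\<dots> \<le> size C"
    using size_mset_mono[OF mset_set_set_mset_msubset, of C] by simp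
  finally show False using assms(2) by simp
qed

lemma int_choose_two: "2 * int (k choose 2) = int k * (int k - 1)"
proof -
  have "even (k * (k - 1))" by (cases "even k") auto
  then have "2 * (k choose 2) = k * (k - 1)" by (simp add: choose_two)
  then have "int (2 * (k choose 2)) = int (k * (k - 1))" by (rule arg_cong)
  then show ?thesis by (cases "k = 0") (auto simp: of_nat_diff)
qed

lemma assoc_pair_unique:
  assumes "3 \<le> v" "assoc_pair v b l e" "assoc_pair v b l' e'"
  shows "l' = l \<and> e' = e"
proof -
  define N where "N = int (v choose 2)"
  have "int v * 2 \<le> int v * (int v - 1)" using assms(1) by (intro mult_left_mono) auto
  then have N: "int v \<le> N" using int_choose_two[of v] unfolding N_def by linarith
  have eq: "(l - l') * N = e' - e"
    using assms(2,3) unfolding assoc_pair_def N_def by (simp add: algebra_simps)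
  have "\<bar>e' - e\<bar> < int v" using assms(2,3) unfolding assoc_pair_def by linarith
  moreover have "N \<le> \<bar>(l - l') * N\<bar>" if "l \<noteq> l'"
  proof -
    have "1 * N \<le> \<bar>l - l'\<bar> * N" using that N by (intro mult_right_mono) auto
    then show ?thesis using N by (simp add: abs_mult)
  qed
  ultimately show ?thesis using eq N by fastforce
qed

locale ngdd_gdd_completion =
  fixes V U :: "'a set" and G :: "nat \<Rightarrow> 'a set" and A B :: "'a set set" and C :: "'a set multiset"
    and m n :: nat and l :: int
  assumes ngdd: "NGDD V G U m n (card U) A"
    and gdd: "GDD V U (l - 1) B"
    and ts: "TS U C"
begin

definition blocks :: "'a set multiset" where
  "blocks = mset_set A + mset_set B + C"

lemma finite_V: "finite V"
  using ngdd unfolding NGDD_def by (elim conjE) assumption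

lemma V_eq: "V = U \<union> (\<Union>i\<in>{1..m + n}. G i)"
  using ngdd unfolding NGDD_def by (elim conjE) assumption

lemma groups: "\<forall>i\<in>{1..m + n}. G i \<subseteq> V \<and> card (G i) = 2 \<and> G i \<inter> U = {}"
  using ngdd unfolding NGDD_def by (elim conjE) assumption

lemma groups_disjoint: "\<forall>i\<in>{1..m + n}. \<forall>j\<in>{1..m + n}. i \<noteq> j \<longrightarrow> G i \<inter> G j = {}"
  using ngdd unfolding NGDD_def by (elim conjE) assumption

lemma A_blocks: "\<forall>T\<in>A. T \<subseteq> V \<and> card T = 3"
  using ngdd unfolding NGDD_def by (elim conjE) assumption

lemma pcount_A_cases: "\<forall>P. P \<subseteq> V \<longrightarrow> card P = 2 \<longrightarrow>
    pcount A P = (if \<exists>i\<in>{1..m}. P = G i then 2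
                  else if P \<subseteq> U \<or> (\<exists>i\<in>{m + 1..m + n}. P = G i) then 0 else 1)"
  using ngdd unfolding NGDD_def by (elim conjE) assumption

lemma pcount_A: "P \<subseteq> V \<Longrightarrow> card P = 2 \<Longrightarrow>
    pcount A P = (if P \<in> G ` {1..m} then 2
                  else if P \<subseteq> U \<or> P \<in> G ` {m + 1..m + n} then 0 else 1)"
  using pcount_A_cases by (simp add: image_iff)

lemma group: "i \<in> {1..m + n} \<Longrightarrow> G i \<subseteq> V \<and> card (G i) = 2 \<and> G i \<inter> U = {}"
  using groups by blast

lemma U_subset_V: "U \<subseteq> V"
  using gdd unfolding GDD_def by (elim conjE) assumption

lemma B_blocks: "\<forall>T\<in>B. T \<subseteq> V \<and> card T = 3 \<and> card (T \<inter> U) \<le> 1"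
  using gdd unfolding GDD_def by (elim conjE) assumption

lemma pcount_B_cases: "\<forall>P. P \<subseteq> V \<longrightarrow> card P = 2 \<longrightarrow> \<not> P \<subseteq> U \<longrightarrow> int (pcount B P) = l - 1"
  using gdd unfolding GDD_def by (elim conjE) assumption

lemma pcount_B: "P \<subseteq> V \<Longrightarrow> card P = 2 \<Longrightarrow> \<not> P \<subseteq> U \<Longrightarrow> int (pcount B P) = l - 1"
  using pcount_B_cases by blast

lemma B_block: "T \<in> B \<Longrightarrow> T \<subseteq> V \<and> card T = 3 \<and> card (T \<inter> U) \<le> 1"
  using B_blocks by blast

lemma C_block: "T \<in># C \<Longrightarrow> T \<subseteq> U \<and> card T = 3"
  using ts unfolding TS_def by blast

lemma finite_U: "finite U"
  using ts unfolding TS_def by blast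

lemma finite_A: "finite A"
  using A_blocks finite_V by (metis Pow_iff finite_Pow_iff finite_subset subsetI)

lemma finite_B: "finite B"
  using B_block finite_V by (metis Pow_iff finite_Pow_iff finite_subset subsetI)

lemma group_nonempty: "i \<in> {1..m + n} \<Longrightarrow> G i \<noteq> {}"
  using group by fastforce

lemma group_inject: "i \<in> {1..m + n} \<Longrightarrow> j \<in> {1..m + n} \<Longrightarrow> G i = G j \<Longrightarrow> i = j"
  using groups_disjoint group_nonempty by blast

lemma group_not_subset_U: "i \<in> {1..m + n} \<Longrightarrow> \<not> G i \<subseteq> U"
  using group group_nonempty by blast

lemma card_V: "card V = card U + 2 * m + 2 * n"
proof -
  have fin: "finite (G i)" if "i \<in> {1..m + n}" for i
    using group[OF that] by (simp add: card_ge_0_finite)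
  have "card (\<Union>i\<in>{1..m + n}. G i) = 2 * (m + n)"
    using fin groups_disjoint group by (subst card_UN_disjoint) auto
  moreover have "U \<inter> (\<Union>i\<in>{1..m + n}. G i) = {}" using group by blast
  ultimately show ?thesis
    using V_eq finite_U fin by (simp add: card_Un_disjoint)
qed

lemma lam_blocks: "lam blocks S = pcount A S + pcount B S + lam C S"
  unfolding blocks_def using lam_blocks_union[OF finite_A finite_B] .

lemma pcount_A_inside: "P \<subseteq> U \<Longrightarrow> card P = 2 \<Longrightarrow> pcount A P = 0"
proof -
  assume P: "P \<subseteq> U" "card P = 2"
  have "P \<notin> G ` {1..m}" using P(1) group_not_subset_U by auto
  then show "pcount A P = 0" using pcount_A P U_subset_V by auto
qed

lemma lam_blocks_inside: "P \<subseteq> U \<Longrightarrow> card P = 2 \<Longrightarrow> lam blocks P = lam C P"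
proof -
  assume P: "P \<subseteq> U" "card P = 2"
  have "pcount A P = 0" using pcount_A_inside P .
  moreover have "\<not> P \<subseteq> T" if "T \<in> B" for T
  proof
    assume "P \<subseteq> T"
    then have "card P \<le> card (T \<inter> U)"
      using P(1) B_block[OF that] by (intro card_mono) (auto simp: card_ge_0_finite)
    then show False using P(2) B_block[OF that] by simp
  qed
  then have "{T \<in> B. P \<subseteq> T} = {}" by blast
  then have "pcount B P = 0" unfolding pcount_def by (metis card.empty)
  ultimately show ?thesis using lam_blocks by simp
qed

lemma lam_blocks_outside:
  assumes "P \<subseteq> V" "card P = 2" "\<not> P \<subseteq> U"
  shows "int (lam blocks P) =
    l + (if P \<in> G ` {1..m} then 1 else if P \<in> G ` {m + 1..m + n} then -1 else 0)"
proof -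
  have "lam C P = 0" unfolding lam_def using C_block assms(3) by fastforce
  then have "int (lam blocks P) = int (pcount A P) + (l - 1)" using lam_blocks pcount_B[OF assms] by simp
  moreover have "pcount A P = (if P \<in> G ` {1..m} then 2 else if P \<in> G ` {m + 1..m + n} then 0 else 1)"
    using pcount_A[OF assms(1,2)] assms(3) by simp
  ultimately show ?thesis by simp
qed

definition group_of :: "'a \<Rightarrow> nat" where
  "group_of x = (THE i. i \<in> {1..m + n} \<and> x \<in> G i)"

definition group_side :: "'a \<Rightarrow> nat" where
  "group_side x = (if x = (SOME y. y \<in> G (group_of x)) then 0 else 1)"

lemma group_of_eq: "i \<in> {1..m + n} \<Longrightarrow> x \<in> G i \<Longrightarrow> group_of x = i"
  unfolding group_of_def using groups_disjoint by (intro the_equality) blast+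

lemma group_of_outside: "x \<in> V \<Longrightarrow> x \<notin> U \<Longrightarrow> group_of x \<in> {1..m + n} \<and> x \<in> G (group_of x)"
  using V_eq group_of_eq by blast

lemma group_side_less: "group_side x < 2"
  unfolding group_side_def by simp

lemma group_side_inject:
  assumes "i \<in> {1..m + n}" "x \<in> G i" "y \<in> G i" "group_side x = group_side y"
  shows "x = y"
proof -
  define z where "z = (SOME z. z \<in> G i)"
  have z: "z \<in> G i" unfolding z_def using assms(2) by (rule someI)
  obtain a b where ab: "G i = {a, b}" using group[OF assms(1)] card_2_iff by metis
  have "group_side w = (if w = z then 0 else 1)" if "w \<in> G i" for w
    using group_of_eq[OF assms(1) that] unfolding group_side_def z_def by simp
  then have "x = z \<longleftrightarrow> y = z" using assms(2-4) by (metis zero_neq_one)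
  then show ?thesis using ab z assms(2,3) by auto
qed

lemma lam_blocks_groups:
  assumes "x \<in> V - U" "y \<in> V - U" "x \<noteq> y"
  shows "int (lam blocks {x, y}) - l =
    (if group_of x = group_of y then if group_of x \<le> m then 1 else -1 else 0)"
proof -
  have x: "group_of x \<in> {1..m + n}" "x \<in> G (group_of x)"
    and y: "group_of y \<in> {1..m + n}" "y \<in> G (group_of y)"
    using group_of_outside assms by auto
  have P: "{x, y} \<subseteq> V" "card {x, y} = 2" "\<not> {x, y} \<subseteq> U" using assms by auto
  have "{x, y} = G k \<longleftrightarrow> k = group_of x \<and> group_of y = k" if "k \<in> {1..m + n}" for k
  proof
    assume "{x, y} = G k"
    then show "k = group_of x \<and> group_of y = k" using group_of_eq[OF that] by auto
  next
    assume "k = group_of x \<and> group_of y = k"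
    then show "{x, y} = G k"
      using x y group[OF that] P(2) by (metis card_subset_eq card.infinite empty_subsetI insert_subset zero_neq_numeral)
  qed
  then have "{x, y} \<in> G ` {1..m} \<longleftrightarrow> group_of x = group_of y \<and> group_of x \<le> m"
    and "{x, y} \<in> G ` {m + 1..m + n} \<longleftrightarrow> group_of x = group_of y \<and> m < group_of x"
    using x(1) by (auto simp: image_iff)
  then show ?thesis using lam_blocks_outside[OF P] by auto
qed

lemma lam_blocks_cross:
  assumes "x \<in> U" "y \<in> V - U"
  shows "int (lam blocks {x, y}) = l"
proof -
  have "x \<noteq> y" using assms by blast
  then have P: "{x, y} \<subseteq> V" "card {x, y} = 2" "\<not> {x, y} \<subseteq> U" using assms U_subset_V by auto
  have "{x, y} \<notin> G ` {1..m + n}" using assms(1) group by fastforce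
  then show ?thesis using lam_blocks_outside[OF P] by auto
qed

lemma blocks_subset: "\<forall>T\<in>#blocks. T \<subseteq> V \<and> card T = 3"
  unfolding blocks_def using finite_A finite_B A_blocks B_blocks U_subset_V by (auto dest!: C_block)

lemma card_groups_image: "{i..j} \<subseteq> {1..m + n} \<Longrightarrow> card (G ` {i..j}) = card {i..j}"
  using group_inject by (intro card_image inj_onI) (metis subsetD)

lemma sum_lam_blocks_inside:
  "(\<Sum>P | P \<subseteq> U \<and> card P = 2. int (lam blocks P)) = 3 * int (size C)"
proof -
  have "(\<Sum>P | P \<subseteq> U \<and> card P = 2. int (lam blocks P)) = (\<Sum>P | P \<subseteq> U \<and> card P = 2. int (lam C P))"
    using lam_blocks_inside by simp
  also have "\<dots> = 3 * int (size C)"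
    using sum_lam_pairs[OF finite_U, of C] C_block by (simp flip: of_nat_sum)
  finally show ?thesis .
qed

lemma sum_lam_blocks_outside:
  "(\<Sum>P \<in> {P. P \<subseteq> V \<and> card P = 2} - {P. P \<subseteq> U \<and> card P = 2}. int (lam blocks P)) =
    l * (int (card V choose 2) - int (card U choose 2)) + int m - int n"
proof -
  define Ps where "Ps = {P. P \<subseteq> V \<and> card P = 2}"
  define UPs where "UPs = {P. P \<subseteq> U \<and> card P = 2}"
  define GP GN where "GP = G ` {1..m}" and "GN = G ` {m + 1..m + n}"
  have fin: "finite Ps" and sub: "UPs \<subseteq> Ps" unfolding Ps_def UPs_def using finite_V U_subset_V by auto
  have "G i \<in> Ps - UPs" if "i \<in> {1..m + n}" for i
    unfolding Ps_def UPs_def using group[OF that] group_not_subset_U[OF that] by simp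
  moreover have "G i \<noteq> G j" if "i \<in> {1..m}" "j \<in> {m + 1..m + n}" for i j
    using group_inject[of i j] that by auto
  ultimately have G_sub: "GP \<subseteq> Ps - UPs" "GN \<subseteq> Ps - UPs" "GP \<inter> GN = {}"
    unfolding GP_def GN_def by auto
  have "int (lam blocks P) = l + ((if P \<in> GP then 1 else 0) - (if P \<in> GN then 1 else 0))"
    if "P \<in> Ps - UPs" for P
  proof -
    have "P \<subseteq> V" "card P = 2" "\<not> P \<subseteq> U" using that unfolding Ps_def UPs_def by auto
    from lam_blocks_outside[OF this]
    have "int (lam blocks P) = l + (if P \<in> GP then 1 else if P \<in> GN then -1 else 0)"
      unfolding GP_def GN_def .
    then show ?thesis using G_sub(3) by auto
  qed
  then have "(\<Sum>P\<in>Ps - UPs. int (lam blocks P)) =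
      (\<Sum>P\<in>Ps - UPs. l + ((if P \<in> GP then 1 else 0) - (if P \<in> GN then 1 else 0)))"
    by (rule sum.cong[OF refl])
  also have "\<dots> = l * int (card (Ps - UPs)) + int (card GP) - int (card GN)"
    using fin G_sub by (simp add: sum.distrib sum_subtractf sum.If_cases Int_absorb1)
  also have "card (Ps - UPs) = card Ps - card UPs" using fin sub by (simp add: card_Diff_subset finite_subset)
  finally show ?thesis
    using card_mono[OF fin sub] n_subsets[OF finite_V] n_subsets[OF finite_U] card_groups_image
    unfolding Ps_def UPs_def GP_def GN_def by (simp add: of_nat_diff)
qed

lemma size_blocks:
  "3 * int (size blocks) =
    l * int (card V choose 2) + int m - int n + (3 * int (size C) - l * int (card U choose 2))"
proof -
  let ?Ps = "{P. P \<subseteq> V \<and> card P = 2}" and ?UPs = "{P. P \<subseteq> U \<and> card P = 2}"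
  have "3 * int (size blocks) = (\<Sum>P\<in>?Ps. int (lam blocks P))"
    using sum_lam_pairs[OF finite_V blocks_subset] by (simp flip: of_nat_sum)
  also have "\<dots> = (\<Sum>P\<in>?Ps - ?UPs. int (lam blocks P)) + (\<Sum>P\<in>?UPs. int (lam blocks P))"
    using finite_V U_subset_V by (intro sum.subset_diff) auto
  finally show ?thesis using sum_lam_blocks_inside sum_lam_blocks_outside by (simp add: algebra_simps)
qed

lemma C_card: "\<forall>T\<in>#C. card T = 3"
  using C_block by blast

lemma lam_blocks_triple:
  assumes "card S = 3"
  shows "lam blocks S = (if S \<in> A then 1 else 0) + (if S \<in> B then 1 else 0) + count C S"
proof -
  have "pcount A S = (if S \<in> A then 1 else 0)" "pcount B S = (if S \<in> B then 1 else 0)"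
    using assms A_blocks B_blocks by (simp_all add: pcount_triple)
  then show ?thesis using lam_blocks lam_triple[OF C_card assms] by simp
qed

text \<open>Inside U, 3-balance of C is tested against a triple that C misses.\<close>

lemma three_balanced_blocks:
  assumes "A \<inter> B = {}" "three_balanced U C" "size C < card U choose 3"
  shows "three_balanced V blocks"
proof -
  obtain S0 where S0: "S0 \<subseteq> U" "card S0 = 3" "S0 \<notin># C"
    using ex_triple_not_in_mset[OF finite_U assms(3)] by blast
  have le1: "lam blocks S \<le> 1" if S: "S \<subseteq> V" "card S = 3" for S
  proof (cases "S \<subseteq> U")
    case True
    obtain a b where ab: "a \<in> S" "b \<in> S" "a \<noteq> b" using S(2) by (metis card_3_iff insertI1 insertCI)
    have "pcount A {a, b} = 0" using ab True by (intro pcount_A_inside) auto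
    then have "S \<notin> A" using pcount_pos[OF finite_A, of S "{a, b}"] ab by auto
    moreover have "S \<notin> B" using B_block[of S] True S(2) by (auto simp: Int_absorb2)
    moreover have "count C S \<le> 1"
    proof -
      have "\<bar>int (lam C S) - int (lam C S0)\<bar> \<le> 1"
        using assms(2) True S(2) S0(1,2) unfolding three_balanced_def by blast
      moreover have "lam C S0 = 0" using S0(3) lam_triple[OF C_card S0(2)] by (simp add: not_in_iff)
      ultimately show ?thesis using lam_triple[OF C_card S(2)] by linarith
    qed
    ultimately show ?thesis using lam_blocks_triple[OF S(2)] by simp
  next
    case False
    then have "count C S = 0" using C_block by (meson count_eq_zero_iff)
    then show ?thesis using lam_blocks_triple[OF S(2)] assms(1) by auto
  qed
  show ?thesis unfolding three_balanced_def
  proof (intro allI impI)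
    fix S T assume "S \<subseteq> V" "T \<subseteq> V" "card S = 3" "card T = 3"
    then have "lam blocks S \<le> 1" "lam blocks T \<le> 1" using le1 by auto
    then show "\<bar>int (lam blocks S) - int (lam blocks T)\<bar> \<le> 1" by linarith
  qed
qed

text \<open>Extending an isomorphism g of the defect graph of C with \<open>core_matching s S q\<close> to V: the core
  stays, the old matching edges are renumbered by \<open>shift_index\<close>, and group \<open>G\<^sub>i\<close> becomes the new
  edge \<open>new_index \<dots> i\<close>.\<close>

context
  fixes g :: "'a \<Rightarrow> nat" and s q :: nat and S :: "nat \<Rightarrow> nat \<Rightarrow> int"
  assumes g: "bij_betw g U {0..<card U}"
    and labels_U: "\<forall>x\<in>U. \<forall>y\<in>U. x \<noteq> y \<longrightarrow>
      int (lam C {x, y}) - l = core_matching s S q (card U) (g x) (g y)"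
    and fits: "s + 2 * q \<le> card U"
    and even: "even s" "even (card U)"
begin

definition core_vertices :: "'a set" where
  "core_vertices = {x \<in> U. g x < s}"

definition old_pairs :: nat where
  "old_pairs = (card U - s) div 2"

definition matching_index :: "'a \<Rightarrow> nat" where
  "matching_index x = (if x \<in> U then shift_index q m ((g x - s) div 2)
                       else new_index q m old_pairs (group_of x))"

definition matching_side :: "'a \<Rightarrow> nat" where
  "matching_side x = (if x \<in> U then (g x - s) mod 2 else group_side x)"

lemma card_U_old_pairs: "card U = s + 2 * old_pairs" "q \<le> old_pairs"
  using fits even unfolding old_pairs_def by auto

lemma g_less: "x \<in> U \<Longrightarrow> g x < card U"
  using g unfolding bij_betw_def by auto

lemma g_inject: "x \<in> U \<Longrightarrow> y \<in> U \<Longrightarrow> g x = g y \<Longrightarrow> x = y"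
  using g unfolding bij_betw_def inj_on_def by blast

lemma old_pair_less: "x \<in> U - core_vertices \<Longrightarrow> (g x - s) div 2 < old_pairs"
proof -
  assume x: "x \<in> U - core_vertices"
  then have "g x - s < old_pairs * 2" using g_less[of x] card_U_old_pairs(1) unfolding core_vertices_def by auto
  then show ?thesis by (rule less_mult_imp_div_less)
qed

lemma matching_index_ne:
  assumes "x \<in> U - core_vertices" "y \<in> V - U"
  shows "matching_index x \<noteq> matching_index y"
proof -
  have "group_of y \<in> {1..m + n}" using group_of_outside assms(2) by blast
  from shift_index_ne_new_index[OF old_pair_less[OF assms(1)] this]
  show ?thesis using assms unfolding matching_index_def by simp
qed

lemma lam_blocks_matching:
  assumes "x \<in> V - core_vertices" "y \<in> V - core_vertices" "x \<noteq> y"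
  shows "int (lam blocks {x, y}) - l = (if matching_index x = matching_index y
           then if matching_index x < q + m then 1 else -1 else 0)"
proof -
  have new_index: "group_of z \<in> {1..m + n}" if "z \<in> V - U" for z
    using group_of_outside that by blast
  consider "x \<in> U" "y \<in> U" | "x \<in> U" "y \<notin> U" | "x \<notin> U" "y \<in> U" | "x \<notin> U" "y \<notin> U"
    by blast
  then show ?thesis
  proof cases
    case 1
    have "g x \<noteq> g y" using 1 assms(3) g_inject by blast
    then have "int (lam C {x, y}) - l = (if (g x - s) div 2 = (g y - s) div 2
        then if (g x - s) div 2 < q then 1 else -1 else 0)"
      using 1 assms labels_U g_less unfolding core_vertices_def core_matching_def by auto
    then show ?thesis using 1 assms(3) lam_blocks_inside[of "{x, y}"]
      unfolding matching_index_def by (simp add: shift_index_inject shift_index_less_iff)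
  next
    case 2
    then show ?thesis using assms matching_index_ne[of x y] lam_blocks_cross[of x y] by simp
  next
    case 3
    then show ?thesis using assms matching_index_ne[of y x] lam_blocks_cross[of y x] by (simp add: insert_commute)
  next
    case 4
    then have "x \<in> V - U" "y \<in> V - U" using assms by auto
    then show ?thesis
      using assms(3) lam_blocks_groups new_index_inject[OF card_U_old_pairs(2) new_index new_index]
        new_index_less_iff[OF card_U_old_pairs(2) new_index]
      unfolding matching_index_def by simp
  qed
qed

lemma matching_coords_inj: "inj_on (\<lambda>x. (matching_index x, matching_side x)) (V - core_vertices)"
proof (rule inj_onI)
  fix x y assume x: "x \<in> V - core_vertices" and y: "y \<in> V - core_vertices"
    and eq: "(matching_index x, matching_side x) = (matching_index y, matching_side y)"
  consider "x \<in> U" "y \<in> U" | "x \<in> U" "y \<notin> U" | "x \<notin> U" "y \<in> U" | "x \<notin> U" "y \<notin> U"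
    by blast
  then show "x = y"
  proof cases
    case 1
    then have "(g x - s) div 2 = (g y - s) div 2" "(g x - s) mod 2 = (g y - s) mod 2"
      using eq unfolding matching_index_def matching_side_def by (simp_all add: shift_index_inject)
    then have "g x - s = g y - s" by (metis div_mult_mod_eq)
    then have "g x = g y" using 1 x y unfolding core_vertices_def by auto
    then show ?thesis using 1 g_inject by blast
  next
    case 4
    then have grp: "group_of x \<in> {1..m + n}" "group_of y \<in> {1..m + n}"
      and mem: "x \<in> G (group_of x)" "y \<in> G (group_of y)"
      using x y group_of_outside by auto
    then have "group_of x = group_of y"
      using eq 4 new_index_inject[OF card_U_old_pairs(2) grp] unfolding matching_index_def by simp
    then show ?thesis using eq 4 grp mem group_side_inject unfolding matching_side_def by auto
  qed (use x y eq matching_index_ne in fastforce)+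
qed

lemma matching_coords_less:
  "x \<in> V - core_vertices \<Longrightarrow> matching_index x < old_pairs + m + n \<and> matching_side x < 2"
  using shift_index_less[OF old_pair_less] new_index_less[OF card_U_old_pairs(2)] group_of_outside
    group_side_less unfolding matching_index_def matching_side_def by auto

lemma core_vertices_bij: "bij_betw g core_vertices {0..<s}"
proof (rule bij_betw_subset[OF g])
  show "core_vertices \<subseteq> U" unfolding core_vertices_def by blast
  show "g ` core_vertices = {0..<s}"
    using g fits unfolding core_vertices_def bij_betw_def by force
qed

lemma defect_iso_blocks_extend:
  "defect_iso V blocks l (core_matching s S (q + m) (card V))"
proof (rule defect_iso_core_matching)
  show "V = core_vertices \<union> (V - core_vertices)" "core_vertices \<inter> (V - core_vertices) = {}"
    using U_subset_V unfolding core_vertices_def by auto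
  show "card V = s + 2 * (old_pairs + m + n)" using card_V card_U_old_pairs(1) by simp
  show "\<forall>x\<in>core_vertices. \<forall>y\<in>core_vertices. x \<noteq> y \<longrightarrow>
      int (lam blocks {x, y}) - l = S (g x) (g y)"
  proof (intro ballI impI)
    fix x y assume xy: "x \<in> core_vertices" "y \<in> core_vertices" "x \<noteq> y"
    then have "g x \<noteq> g y" using g_inject unfolding core_vertices_def by blast
    then show "int (lam blocks {x, y}) - l = S (g x) (g y)"
      using xy labels_U lam_blocks_inside[of "{x, y}"] fits core_matching_core[of "g x" s "g y"]
      unfolding core_vertices_def by auto
  qed
  show "\<forall>x\<in>core_vertices. \<forall>y\<in>V - core_vertices. int (lam blocks {x, y}) = l"
  proof (intro ballI)
    fix x y assume x: "x \<in> core_vertices" and y: "y \<in> V - core_vertices"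
    show "int (lam blocks {x, y}) = l"
    proof (cases "y \<in> U")
      case True
      have "x \<noteq> y" using x y unfolding core_vertices_def by auto
      moreover have "core_matching s S q (card U) (g x) (g y) = 0"
        using True x y unfolding core_vertices_def core_matching_def by auto
      ultimately have "int (lam C {x, y}) - l = 0" using True x labels_U unfolding core_vertices_def by auto
      then show ?thesis using True x y lam_blocks_inside[of "{x, y}"] \<open>x \<noteq> y\<close>
        unfolding core_vertices_def by auto
    qed (use x y lam_blocks_cross core_vertices_def in auto)
  qed
qed (use finite_V core_vertices_bij matching_coords_inj matching_coords_less lam_blocks_matching in auto)

end

lemma defect_iso_blocks:
  assumes "defect_iso U C l (core_matching s S q (card U))"
    and "s + 2 * q \<le> card U" "even s" "even (card U)"
  shows "defect_iso V blocks l (core_matching s S (q + m) (card V))"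
proof -
  obtain g where "bij_betw g U {0..<card U}"
    "\<forall>x\<in>U. \<forall>y\<in>U. x \<noteq> y \<longrightarrow> int (lam C {x, y}) - l = core_matching s S q (card U) (g x) (g y)"
    using assms(1) unfolding defect_iso_def by blast
  then show ?thesis using defect_iso_blocks_extend assms(2-4) by blast
qed

lemma defect_graph_blocks:
  assumes "even (card U)"
    and "if d mod 2 = int (card U div 2) mod 2
      then H0_ok (card U) d \<and> defect_iso U C l (H0 (card U) d)
      else (H1_ok (card U) d \<and> defect_iso U C l (H1 (card U) d)) \<or>
           (H2_ok (card U) d \<and> defect_iso U C l (H2 (card U) d))"
    (is "if ?par_U then _ else _")
  defines "e \<equiv> d + int m - int n"
  shows "if e mod 2 = int (card V div 2) mod 2
      then H0_ok (card V) e \<and> defect_iso V blocks l (H0 (card V) e)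
      else (H1_ok (card V) e \<and> defect_iso V blocks l (H1 (card V) e)) \<or>
           (H2_ok (card V) e \<and> defect_iso V blocks l (H2 (card V) e))"
proof -
  have mod2: "(a + x - y) mod 2 = (b + x + y) mod 2 \<longleftrightarrow> a mod 2 = b mod 2" for a b x y :: int
    by presburger
  have "int (card V div 2) = int (card U div 2) + int m + int n" using card_V assms(1) by auto
  then have parity: "e mod 2 = int (card V div 2) mod 2 \<longleftrightarrow> ?par_U" unfolding e_def by (simp only: mod2)
  show ?thesis
  proof (cases ?par_U)
    case True
    then have ok: "H0_ok (card U) d" and iso: "defect_iso U C l (H0 (card U) d)" using assms(2) by auto
    have "defect_iso V blocks l (H0 (card V) e)"
      unfolding card_V e_def H0_add_pairs[OF ok] using iso H0_ok_fits[OF ok] assms(1) card_V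
      by (metis defect_iso_blocks H0_eq_core_matching even_zero add_0)
    then show ?thesis using True parity H0_ok_add_pairs[OF ok] card_V unfolding e_def by simp
  next
    case False
    then consider "H1_ok (card U) d" "defect_iso U C l (H1 (card U) d)"
      | "H2_ok (card U) d" "defect_iso U C l (H2 (card U) d)" using assms(2) by auto
    then show ?thesis
    proof cases
      case 1
      have "defect_iso V blocks l (H1 (card V) e)"
        unfolding card_V e_def H1_add_pairs[OF 1(1)] using 1(2) H1_ok_fits[OF 1(1)] assms(1) card_V
        by (metis defect_iso_blocks H1_eq_core_matching[OF 1(1)] even_numeral)
      then show ?thesis using False parity H1_ok_add_pairs[OF 1(1)] card_V unfolding e_def by simp
    next
      case 2
      have "defect_iso V blocks l (H2 (card V) e)"
        unfolding card_V e_def H2_add_pairs[OF 2(1)] using 2(2) H2_ok_fits[OF 2(1)] assms(1) card_V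
        by (metis defect_iso_blocks H2_eq_core_matching[OF 2(1)] even_numeral)
      then show ?thesis using False parity H2_ok_add_pairs[OF 2(1)] card_V unfolding e_def by simp
    qed
  qed
qed

lemma TS_blocks: "TS V blocks"
  using finite_V card_V blocks_subset ts unfolding TS_def by auto

lemma pair_labels_blocks:
  assumes "\<forall>x\<in>U. \<forall>y\<in>U. x \<noteq> y \<longrightarrow> int (lam C {x, y}) \<in> {l - 1, l, l + 1}"
  shows "\<forall>x\<in>V. \<forall>y\<in>V. x \<noteq> y \<longrightarrow> int (lam blocks {x, y}) \<in> {l - 1, l, l + 1}"
proof (intro ballI impI)
  fix x y assume xy: "x \<in> V" "y \<in> V" "x \<noteq> y"
  show "int (lam blocks {x, y}) \<in> {l - 1, l, l + 1}"
  proof (cases "{x, y} \<subseteq> U")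
    case True
    then show ?thesis using assms xy lam_blocks_inside by simp
  next
    case False
    then show ?thesis using xy lam_blocks_outside[of "{x, y}"] by simp
  qed
qed

lemma nearly_2_balanced_blocks:
  assumes "nearly_2_balanced U C" "assoc_pair (card U) (size C) l d"
  shows "nearly_2_balanced V blocks"
proof -
  obtain l' d' where ap: "assoc_pair (card U) (size C) l' d'" and C2: "C2 (card U) (size C) l'"
    and pairs: "\<forall>x\<in>U. \<forall>y\<in>U. x \<noteq> y \<longrightarrow> int (lam C {x, y}) \<in> {l' - 1, l', l' + 1}"
    and graph: "if d' mod 2 = int (card U div 2) mod 2
      then H0_ok (card U) d' \<and> defect_iso U C l' (H0 (card U) d')
      else (H1_ok (card U) d' \<and> defect_iso U C l' (H1 (card U) d')) \<or>
           (H2_ok (card U) d' \<and> defect_iso U C l' (H2 (card U) d'))"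
    using assms(1) unfolding nearly_2_balanced_def by blast
  have "3 \<le> card U" using ts unfolding TS_def by blast
  then have l': "l' = l" "d' = d" using assoc_pair_unique[OF _ assms(2) ap] by auto
  have even_U: "even (card U)" and odd_l: "odd l" using C2 l' unfolding C2_def by auto
  define e where "e = d + int m - int n"
  have size: "3 * int (size blocks) = l * int (card V choose 2) + e"
    using size_blocks assms(2) unfolding assoc_pair_def e_def by simp
  have bounds: "- int (card V) < 2 * e" "2 * e < int (card V)"
    using assms(2) card_V unfolding assoc_pair_def e_def by auto
  have "l * int (card V) * (int (card V) - 1) = 2 * (l * int (card V choose 2))"
    using int_choose_two[of "card V"] by (metis mult.assoc mult.left_commute)
  then have "6 * int (size blocks) = l * int (card V) * (int (card V) - 1) + 2 * e"
    using size by linarith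
  then have "C2 (card V) (size blocks) l"
    using bounds even_U odd_l card_V unfolding C2_def by simp
  moreover have "assoc_pair (card V) (size blocks) l e"
    using size bounds unfolding assoc_pair_def by simp
  moreover note pair_labels_blocks[OF pairs[unfolded l']]
  moreover note defect_graph_blocks[OF even_U graph[unfolded l'], folded e_def]
  ultimately show ?thesis unfolding nearly_2_balanced_def by blast
qed

end

theorem lemma6p5:
  fixes V U :: "'a set" and G :: "nat \<Rightarrow> 'a set"
    and A B :: "'a set set" and C :: "'a set multiset"
    and m n u v c :: nat and l d :: int
  assumes "m mod 3 = 0" and "n mod 3 = 0" and "u mod 6 = 2 \<or> u mod 6 = 4"
    and "v = 2 * m + 2 * n + u"
    and "c < u choose 3"
    and "assoc_pair u c l d" and "C2 u c l"
    and "NGDD V G U m n u A"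
    and "GDD V U (l - 1) B"
    and "NWBTS U C" and "size C = c"
    and "A \<inter> B = {}" and "A \<inter> set_mset C = {}" and "B \<inter> set_mset C = {}"
  shows "NWBTS V (mset_set A + mset_set B + C) \<and>
         3 * int (size (mset_set A + mset_set B + C)) = l * int (v choose 2) + int m - int n + d"
proof -
  have u: "card U = u" using assms(8) unfolding NGDD_def by (elim conjE) assumption
  have C: "TS U C" "nearly_2_balanced U C" "three_balanced U C" using assms(10) unfolding NWBTS_def by auto
  interpret ngdd_gdd_completion V U G A B C m n l
    using assms(8,9) C(1) u by unfold_locales simp_all
  have "NWBTS V blocks"
    unfolding NWBTS_def using TS_blocks three_balanced_blocks[OF assms(12) C(3)]
      nearly_2_balanced_blocks[OF C(2)] assms(5,6,11) u by blast
  moreover have "3 * int (size blocks) = l * int (v choose 2) + int m - int n + d"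
  proof -
    have "card V = v" using card_V u assms(4) by simp
    then show ?thesis using size_blocks assms(6,11) u unfolding assoc_pair_def by simp
  qed
  ultimately show ?thesis unfolding blocks_def by blast
qed

end
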